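(* Let $k\ge1$. The square Hermitian orthogonal design $\mathcal{H}_{2k-1}$ induces an irreducible representation of dimension $2^{k-1}$ of the group $\mathcal{G}_{2k-2}$.
   Context: Let $x_1,x_2,\ldots$ be formal real indeterminates. Define $\mathcal{H}_2=(x_1+x_2\sqrt{-1})$ and for $k>1$ the $2^{k-1}\times2^{k-1}$ matrix $\mathcal{H}_{2k}=\begin{pmatrix}\mathcal{H}_{2k-2} & (x_{2k-1}+x_{2k}\sqrt{-1})I_{2^{k-2}}\\ -(x_{2k-1}-x_{2k}\sqrt{-1})I_{2^{k-2}} & \mathcal{H}_{2k-2}^H\end{pmatrix}$ (conjugate transpose with $x_i$ real); $\mathcal{H}_{2k-1}$ is obtained from $\mathcal{H}_{2k}$ by setting $x_{2k}=0$. It satisfies $\mathcal{H}_{2k-1}^H\mathcal{H}_{2k-1}=(x_1^2+\cdots+x_{2k-1}^2)I$. For $m\ge0$, $\mathcal{G}_m$ is the group of order $2^{m+1}$ generated by $g_1,\ldots,g_m$ and a central element $-1$ of order $2$ subject to $g_i^2=-1$ and $g_ig_j=-g_jg_i$ for $i\ne j$. Induced representation: write $\mathcal{H}_{2k-1}=\sum_{i=1}^{2k-1}x_iE_{i-1}$ with $E_0,\ldots,E_{2k-2}\in M_{2^{k-1}}(\mathbb{C})$ (these are unitary with $E_i^HE_j+E_j^HE_i=0$ for $i\ne j$), let $G_i=E_0^HE_i$ for $i=1,\ldots,2k-2$; the induced representation $\rho$ of $\mathcal{G}_{2k-2}$ is given by $\rho(g_i)=G_i$, $\rho(-1)=-I$.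 *)

theory Defs
  imports Complex_Main "Jordan_Normal_Form.Matrix"
begin

definition mat_H :: "complex mat \<Rightarrow> complex mat" where
  "mat_H A = transpose_mat (map_mat cnj A)"

(* Hd k x = the 2^(k-1) x 2^(k-1) matrix \<H>_{2k} evaluated at real values x 1, x 2, ... (1-based);
   defined for k \<ge> 1 (the value at k = 0 is an irrelevant dummy) *)
fun Hd :: "nat \<Rightarrow> (nat \<Rightarrow> real) \<Rightarrow> complex mat" where
  "Hd 0 x = 0\<^sub>m 1 1"
| "Hd (Suc 0) x = mat 1 1 (\<lambda>_. Complex (x 1) (x 2))"
| "Hd (Suc (Suc k)) x =
     (let n = 2 ^ k; A = Hd (Suc k) x; z = Complex (x (2*k+3)) (x (2*k+4)) in
      four_block_mat A (z \<cdot>\<^sub>m 1\<^sub>m n) ((- cnj z) \<cdot>\<^sub>m 1\<^sub>m n) (mat_H A))"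

(* \<H>_{2k-1}: set x_{2k} = 0 *)
definition Hodd :: "nat \<Rightarrow> (nat \<Rightarrow> real) \<Rightarrow> complex mat" where
  "Hodd k x = Hd k (x(2*k := 0))"

(* coefficient matrices: \<H>_{2k-1} = \<Sum>_{i=1}^{2k-1} x_i E_{i-1}; since \<H>_{2k-1} is linear in x,
   E_{i} is \<H>_{2k-1} evaluated at the unit vector x_{i+1} = 1, other x_j = 0 *)
definition Ecoef :: "nat \<Rightarrow> nat \<Rightarrow> complex mat" where
  "Ecoef k i = Hodd k (\<lambda>j. if j = i + 1 then 1 else 0)"

definition Gmat :: "nat \<Rightarrow> nat \<Rightarrow> complex mat" where
  "Gmat k i = mat_H (Ecoef k 0) * Ecoef k i"

(* The assignment g_i \<mapsto> R i (i = 1..m), -1 \<mapsto> -I extends to a representation of the group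
   \<G>_m (presented by generators g_1..g_m, central -1 of order 2, g_i^2 = -1, g_i g_j = - g_j g_i)
   on \<complex>^n, i.e. the images satisfy the defining relations. *)
definition is_G_rep :: "nat \<Rightarrow> nat \<Rightarrow> (nat \<Rightarrow> complex mat) \<Rightarrow> bool" where
  "is_G_rep m n R \<longleftrightarrow>
     (\<forall>i\<in>{1..m}. R i \<in> carrier_mat n n \<and> R i * R i = - 1\<^sub>m n) \<and>
     (\<forall>i\<in>{1..m}. \<forall>j\<in>{1..m}. i \<noteq> j \<longrightarrow> R i * R j = - (R j * R i))"

(* a subspace of \<complex>^n invariant under all images of the generators g_i and -1
   (hence under the whole group image) *)
definition G_invariant_subspace :: "nat \<Rightarrow> nat \<Rightarrow> (nat \<Rightarrow> complex mat) \<Rightarrow> complex vec set \<Rightarrow> bool" where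
  "G_invariant_subspace m n R W \<longleftrightarrow>
     W \<subseteq> carrier_vec n \<and> 0\<^sub>v n \<in> W \<and>
     (\<forall>v\<in>W. \<forall>w\<in>W. v + w \<in> W) \<and> (\<forall>c. \<forall>w\<in>W. c \<cdot>\<^sub>v w \<in> W) \<and>
     (\<forall>i\<in>{1..m}. \<forall>w\<in>W. R i *\<^sub>v w \<in> W) \<and> (\<forall>w\<in>W. (- 1\<^sub>m n) *\<^sub>v w \<in> W)"

definition irreducible_G_rep :: "nat \<Rightarrow> nat \<Rightarrow> (nat \<Rightarrow> complex mat) \<Rightarrow> bool" where
  "irreducible_G_rep m n R \<longleftrightarrow> is_G_rep m n R \<and> n > 0 \<and>
     (\<forall>W. G_invariant_subspace m n R W \<longrightarrow> W = {0\<^sub>v n} \<or> W = carrier_vec n)"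

end

theory Submission
  imports Defs
begin

text \<open>
  Since \<open>\<H>\<^sub>2\<^sub>j\<^sub>+\<^sub>2\<close> is linear in \<open>x\<close>, write \<open>F\<^sub>v\<close> for the coefficient of \<open>x\<^sub>v\<close>. The
  recursion gives \<open>F\<^sub>1 = I\<close>, turns each old coefficient \<open>F\<^sub>v\<close> (\<open>2 \<le> v \<le> 2j+2\<close>) into
  \<open>diag(F\<^sub>v, -F\<^sub>v)\<close> because \<open>F\<^sub>v\<close> is skew-Hermitian, and adds
  \<open>J = [[0,I],[-I,0]]\<close> and \<open>K = [[0,iI],[iI,0]]\<close>. By induction the \<open>F\<^sub>v\<close> with \<open>v \<ge> 2\<close>
  square to \<open>-I\<close> and anticommute pairwise, and \<open>G\<^sub>i = E\<^sub>0\<^sup>H E\<^sub>i = F\<^sub>i\<^sub>+\<^sub>1\<close>.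

  The product \<open>F\<^sub>2 \<cdots> F\<^sub>2\<^sub>j\<^sub>+\<^sub>2\<close> of all generators
  is the scalar \<open>i\<^sup>j\<^sup>+\<^sup>1\<close>, so one level up the product of the first \<open>2j+1\<close> generators is
  \<open>diag(s, -s)\<close> with \<open>s \<noteq> 0\<close>. An invariant subspace \<open>W\<close> is therefore the direct sum of its
  intersections with the two halves, \<open>J\<close> identifies these two halves, and the upper half is an
  invariant subspace for the previous level; hence it is \<open>0\<close> or everything, and so is \<open>W\<close>.
\<close>

lemma mat_H_carrier [simp]: "A \<in> carrier_mat n m \<Longrightarrow> mat_H A \<in> carrier_mat m n"
  unfolding mat_H_def by auto

lemma mat_H_uminus: "mat_H (- A) = - mat_H A"
  unfolding mat_H_def by (rule eq_matI) auto

lemma mat_H_smult_one_mat [simp]: "mat_H (c \<cdot>\<^sub>m 1\<^sub>m n) = cnj c \<cdot>\<^sub>m 1\<^sub>m n"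
  unfolding mat_H_def by (rule eq_matI) auto

lemma mat_H_zero_mat [simp]: "mat_H (0\<^sub>m n m) = 0\<^sub>m m n"
  unfolding mat_H_def by (rule eq_matI) auto

lemma mat_H_one_mat [simp]: "mat_H (1\<^sub>m n) = 1\<^sub>m n"
  unfolding mat_H_def by (rule eq_matI) auto

lemma mat_H_four_block_mat:
  assumes "A \<in> carrier_mat n n" "B \<in> carrier_mat n n" "C \<in> carrier_mat n n" "D \<in> carrier_mat n n"
  shows "mat_H (four_block_mat A B C D) = four_block_mat (mat_H A) (mat_H C) (mat_H B) (mat_H D)"
  unfolding mat_H_def using assms
  by (simp add: map_four_block_mat[of _ n n _ n _ n] transpose_four_block_mat[of _ n n _ n _ n])

lemma uminus_four_block_mat:
  assumes "A \<in> carrier_mat n n" "B \<in> carrier_mat n n" "C \<in> carrier_mat n n" "D \<in> carrier_mat n n"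
  shows "- four_block_mat A B C D = four_block_mat (- A) (- B) (- C) (- (D :: 'a :: group_add mat))"
  using assms by (intro eq_matI) auto

lemma mult_four_block_mat_square:
  assumes "A1 \<in> carrier_mat n n" "B1 \<in> carrier_mat n n" "C1 \<in> carrier_mat n n" "D1 \<in> carrier_mat n n"
    "A2 \<in> carrier_mat n n" "B2 \<in> carrier_mat n n" "C2 \<in> carrier_mat n n" "D2 \<in> carrier_mat n n"
  shows "four_block_mat A1 B1 C1 D1 * four_block_mat A2 B2 C2 D2
    = four_block_mat (A1 * A2 + B1 * C2) (A1 * B2 + B1 * D2) (C1 * A2 + D1 * C2) (C1 * B2 + D1 * (D2 :: 'a :: semiring_0 mat))"
  by (rule mult_four_block_mat) (use assms in auto)

lemma uminus_one_mat_double: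
  "- 1\<^sub>m (2 * n) = four_block_mat (- 1\<^sub>m n) (0\<^sub>m n n) (0\<^sub>m n n) (- 1\<^sub>m n :: 'a :: ring_1 mat)"
  by (intro eq_matI) auto

lemma smult_one_mat_double:
  "c \<cdot>\<^sub>m 1\<^sub>m (2 * n) = four_block_mat (c \<cdot>\<^sub>m 1\<^sub>m n) (0\<^sub>m n n) (0\<^sub>m n n) ((c :: 'a :: ring_1) \<cdot>\<^sub>m 1\<^sub>m n)"
  by (intro eq_matI) auto

lemma smult_mat_mult [simp]: "dim_col A = dim_row B \<Longrightarrow> (c \<cdot>\<^sub>m A) * B = c \<cdot>\<^sub>m (A * (B :: 'a :: comm_ring_1 mat))"
  by (rule mult_smult_assoc_mat[of _ "dim_row A" "dim_col A" _ "dim_col B"]) auto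

lemma mult_smult_mat [simp]: "dim_col A = dim_row B \<Longrightarrow> A * (c \<cdot>\<^sub>m B) = c \<cdot>\<^sub>m (A * (B :: 'a :: comm_ring_1 mat))"
  by (rule mult_smult_distrib[of _ "dim_row A" "dim_col A" _ "dim_col B"]) auto

lemma smult_smult_mat [simp]: "a \<cdot>\<^sub>m (b \<cdot>\<^sub>m A) = (a * b) \<cdot>\<^sub>m (A :: 'a :: semigroup_mult mat)"
  by (intro eq_matI) (auto simp: mult.assoc)

lemma uminus_smult_mat: "- (a \<cdot>\<^sub>m A) = (- a) \<cdot>\<^sub>m (A :: 'a :: ring mat)"
  by (intro eq_matI) auto

lemma smult_uminus_mat: "a \<cdot>\<^sub>m (- A) = (- a) \<cdot>\<^sub>m (A :: 'a :: ring mat)"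
  by (intro eq_matI) auto

lemma uminus_zero_mat [simp]: "- 0\<^sub>m n m = (0\<^sub>m n m :: 'a :: group_add mat)"
  by (intro eq_matI) auto

lemma zero_smult_mat [simp]: "(0 :: 'a :: semiring_0) \<cdot>\<^sub>m A = 0\<^sub>m (dim_row A) (dim_col A)"
  by (intro eq_matI) auto

lemma one_smult_mat [simp]: "(1 :: 'a :: monoid_mult) \<cdot>\<^sub>m A = A"
  by (intro eq_matI) auto

lemma minus_one_smult_mat [simp]: "(- 1 :: 'a :: ring_1) \<cdot>\<^sub>m A = - A"
  by (intro eq_matI) auto

lemmas block_simps = left_add_zero_mat right_add_zero_mat uminus_smult_mat smult_uminus_mat

lemma smult_zero_vec [simp]: "c \<cdot>\<^sub>v 0\<^sub>v n = (0\<^sub>v n :: 'a :: mult_zero vec)"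
  by (intro eq_vecI) auto

lemma smult_append_vec: "c \<cdot>\<^sub>v (a @\<^sub>v b) = (c \<cdot>\<^sub>v a) @\<^sub>v (c \<cdot>\<^sub>v b)"
  by (intro eq_vecI) auto

lemma zero_append_zero_vec [simp]: "0\<^sub>v n @\<^sub>v 0\<^sub>v m = (0\<^sub>v (n + m) :: 'a :: zero vec)"
  by (intro eq_vecI) auto

lemma mult_mat_vec_zero [simp]: "dim_col A = n \<Longrightarrow> A *\<^sub>v 0\<^sub>v n = 0\<^sub>v (dim_row A)"
  by (intro eq_vecI) (auto simp: row_def)

definition vec_subspace :: "nat \<Rightarrow> 'a :: semiring_1 vec set \<Rightarrow> bool" where
  "vec_subspace n W \<longleftrightarrow> W \<subseteq> carrier_vec n \<and> 0\<^sub>v n \<in> W \<and>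
     (\<forall>v\<in>W. \<forall>w\<in>W. v + w \<in> W) \<and> (\<forall>c. \<forall>w\<in>W. c \<cdot>\<^sub>v w \<in> W)"

lemma vec_subspace_dim_one:
  assumes "vec_subspace 1 (W :: 'a :: field vec set)"
  shows "W = {0\<^sub>v 1} \<or> W = carrier_vec 1"
proof (cases "W = {0\<^sub>v 1}")
  case False
  then obtain w where w: "w \<in> W" "w \<noteq> 0\<^sub>v 1" and carrier: "W \<subseteq> carrier_vec 1"
    using assms unfolding vec_subspace_def by auto
  have "w $ 0 \<noteq> 0"
  proof
    assume "w $ 0 = 0"
    then have "w = 0\<^sub>v 1" using w carrier by (intro eq_vecI) auto
    with w show False by simp
  qed
  have "u \<in> W" if "u \<in> carrier_vec 1" for u
  proof -
    have "u = (u $ 0 / w $ 0) \<cdot>\<^sub>v w" using that w carrier \<open>w $ 0 \<noteq> 0\<close> by (intro eq_vecI) auto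
    then show ?thesis using assms w(1) unfolding vec_subspace_def by metis
  qed
  then show ?thesis using carrier by auto
qed simp

definition upper_slice :: "nat \<Rightarrow> nat \<Rightarrow> 'a :: zero vec set \<Rightarrow> 'a vec set" where
  "upper_slice n m W = {x \<in> carrier_vec n. x @\<^sub>v 0\<^sub>v m \<in> W}"

lemma vec_subspace_upper_slice:
  assumes "vec_subspace (n + m) W"
  shows "vec_subspace n (upper_slice n m (W :: 'a :: comm_ring_1 vec set))"
  unfolding vec_subspace_def upper_slice_def
proof (intro conjI ballI allI)
  show "0\<^sub>v n \<in> {x \<in> carrier_vec n. x @\<^sub>v 0\<^sub>v m \<in> W}"
    using assms unfolding vec_subspace_def by auto
next
  fix v w assume "v \<in> {x \<in> carrier_vec n. x @\<^sub>v 0\<^sub>v m \<in> W}" "w \<in> {x \<in> carrier_vec n. x @\<^sub>v 0\<^sub>v m \<in> W}"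
  moreover have "(v + w) @\<^sub>v 0\<^sub>v m = (v @\<^sub>v 0\<^sub>v m) + (w @\<^sub>v 0\<^sub>v m)"
    using calculation by (simp add: append_vec_add[of v n w _ m])
  ultimately show "v + w \<in> {x \<in> carrier_vec n. x @\<^sub>v 0\<^sub>v m \<in> W}"
    using assms unfolding vec_subspace_def by auto
next
  fix c w assume "w \<in> {x \<in> carrier_vec n. x @\<^sub>v 0\<^sub>v m \<in> W}"
  moreover have "(c \<cdot>\<^sub>v w) @\<^sub>v 0\<^sub>v m = c \<cdot>\<^sub>v (w @\<^sub>v 0\<^sub>v m)" by (simp add: smult_append_vec)
  ultimately show "c \<cdot>\<^sub>v w \<in> {x \<in> carrier_vec n. x @\<^sub>v 0\<^sub>v m \<in> W}"
    using assms unfolding vec_subspace_def by auto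
qed auto

lemma upper_slice_invariant:
  assumes "A \<in> carrier_mat n n" "D \<in> carrier_mat m m"
    and "\<forall>w\<in>W. four_block_mat A (0\<^sub>m n m) (0\<^sub>m m n) D *\<^sub>v w \<in> W"
    and "x \<in> upper_slice n m W"
  shows "A *\<^sub>v x \<in> upper_slice n m (W :: 'a :: semiring_0 vec set)"
proof -
  have "four_block_mat A (0\<^sub>m n m) (0\<^sub>m m n) D *\<^sub>v (x @\<^sub>v 0\<^sub>v m) = (A *\<^sub>v x) @\<^sub>v 0\<^sub>v m"
    using assms by (subst mult_mat_vec_split) (auto simp: upper_slice_def)
  then show ?thesis using assms unfolding upper_slice_def by (metis (mono_tags, lifting) mem_Collect_eq mult_mat_vec_carrier)
qed

lemma swap_block_mult_vec:
  assumes "a \<in> carrier_vec n" "b \<in> carrier_vec n"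
  shows "four_block_mat (0\<^sub>m n n) (1\<^sub>m n) (- 1\<^sub>m n) (0\<^sub>m n n) *\<^sub>v (a @\<^sub>v b) = b @\<^sub>v (- a :: 'a :: ring_1 vec)"
  using assms by (subst four_block_mat_mult_vec[of _ n n _ n _ n]) auto

lemma diag_block_mult_vec:
  assumes "a \<in> carrier_vec n" "b \<in> carrier_vec n"
  shows "four_block_mat (c \<cdot>\<^sub>m 1\<^sub>m n) (0\<^sub>m n n) (0\<^sub>m n n) (d \<cdot>\<^sub>m 1\<^sub>m n) *\<^sub>v (a @\<^sub>v b)
    = (c \<cdot>\<^sub>v a) @\<^sub>v (d \<cdot>\<^sub>v b :: 'a :: comm_ring_1 vec)"
  using assms by (subst mult_mat_vec_split) auto

lemma vec_subspace_eq_append_slices: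
  fixes W :: "'a :: field_char_0 vec set"
  assumes W: "vec_subspace (n + n) W" and "s \<noteq> 0"
    and diag: "\<forall>w\<in>W. four_block_mat (s \<cdot>\<^sub>m 1\<^sub>m n) (0\<^sub>m n n) (0\<^sub>m n n) ((- s) \<cdot>\<^sub>m 1\<^sub>m n) *\<^sub>v w \<in> W"
    and swap: "\<forall>w\<in>W. four_block_mat (0\<^sub>m n n) (1\<^sub>m n) (- 1\<^sub>m n) (0\<^sub>m n n) *\<^sub>v w \<in> W"
  shows "W = {x @\<^sub>v y | x y. x \<in> upper_slice n n W \<and> y \<in> upper_slice n n W}"
proof -
  have carrier: "W \<subseteq> carrier_vec (n + n)"
    and add: "\<And>v w. v \<in> W \<Longrightarrow> w \<in> W \<Longrightarrow> v + w \<in> W"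
    and smult: "\<And>c w. w \<in> W \<Longrightarrow> c \<cdot>\<^sub>v w \<in> W"
    using W unfolding vec_subspace_def by auto
  have lower: "0\<^sub>v n @\<^sub>v y \<in> W \<longleftrightarrow> y \<in> upper_slice n n W" if "y \<in> carrier_vec n" for y
  proof
    assume "0\<^sub>v n @\<^sub>v y \<in> W"
    then show "y \<in> upper_slice n n W"
      using swap swap_block_mult_vec[of "0\<^sub>v n" n y] that unfolding upper_slice_def by auto
  next
    assume "y \<in> upper_slice n n W"
    then have "(- 1) \<cdot>\<^sub>v (0\<^sub>v n @\<^sub>v (- y)) \<in> W"
      using swap swap_block_mult_vec[of y n "0\<^sub>v n"] smult unfolding upper_slice_def by auto
    moreover have "(- 1) \<cdot>\<^sub>v (0\<^sub>v n @\<^sub>v (- y)) = 0\<^sub>v n @\<^sub>v y" using that by (intro eq_vecI) auto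
    ultimately show "0\<^sub>v n @\<^sub>v y \<in> W" by simp
  qed
  show ?thesis
  proof (intro equalityI subsetI)
    fix w assume w: "w \<in> W"
    define x y where "x = vec_first w n" and "y = vec_last w n"
    have xy: "x \<in> carrier_vec n" "y \<in> carrier_vec n" "w = x @\<^sub>v y"
      unfolding x_def y_def using w carrier by auto
    have "(s \<cdot>\<^sub>v x) @\<^sub>v ((- s) \<cdot>\<^sub>v y) \<in> W" (is "?Dw \<in> W")
      using diag w xy diag_block_mult_vec[of x n y s "- s"] by auto
    \<comment> \<open>projections of \<open>w\<close> onto the \<open>\<plusminus>s\<close> eigenspaces of the diagonal block\<close>
    moreover have "x @\<^sub>v 0\<^sub>v n = (1/2) \<cdot>\<^sub>v (w + (1/s) \<cdot>\<^sub>v ?Dw)"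
      and "0\<^sub>v n @\<^sub>v y = (1/2) \<cdot>\<^sub>v (w + (- 1/s) \<cdot>\<^sub>v ?Dw)"
      using xy \<open>s \<noteq> 0\<close> by (auto intro!: eq_vecI)
    ultimately have "x @\<^sub>v 0\<^sub>v n \<in> W" "0\<^sub>v n @\<^sub>v y \<in> W" using w add smult by simp_all
    then show "w \<in> {x @\<^sub>v y | x y. x \<in> upper_slice n n W \<and> y \<in> upper_slice n n W}"
      using xy lower unfolding upper_slice_def by auto
  next
    fix w assume "w \<in> {x @\<^sub>v y | x y. x \<in> upper_slice n n W \<and> y \<in> upper_slice n n W}"
    then obtain x y where x: "x \<in> upper_slice n n W" and y: "y \<in> upper_slice n n W" and "w = x @\<^sub>v y"
      by auto
    moreover have "x @\<^sub>v y = (x @\<^sub>v 0\<^sub>v n) + (0\<^sub>v n @\<^sub>v y)"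
      using x y unfolding upper_slice_def by (intro eq_vecI) auto
    ultimately show "w \<in> W" using add lower[of y] x y unfolding upper_slice_def by auto
  qed
qed

definition unit_point :: "nat \<Rightarrow> nat \<Rightarrow> real" where
  "unit_point v i = (if i = v then 1 else 0)"

text \<open>Since \<open>Hd\<close> is linear in \<open>x\<close>, \<open>H_unit j v\<close> is the coefficient matrix of \<open>x\<^sub>v\<close> in
  \<open>\<H>\<^sub>2\<^sub>j\<^sub>+\<^sub>2\<close>.\<close>

abbreviation H_unit :: "nat \<Rightarrow> nat \<Rightarrow> complex mat" where
  "H_unit j v \<equiv> Hd (Suc j) (unit_point v)"

lemma Hd_carrier [simp]: "Hd (Suc j) x \<in> carrier_mat (2^j) (2^j)"
proof (induction j)
  case (Suc j)
  have "(2::nat) ^ Suc j = 2^j + 2^j" by simp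
  then show ?case
    by (simp only: Hd.simps Let_def) (use Suc in \<open>auto intro!: four_block_carrier_mat\<close>)
qed simp

lemma Hd_dims [simp]: "dim_row (Hd (Suc j) x) = 2^j" "dim_col (Hd (Suc j) x) = 2^j"
  using Hd_carrier[of j x] unfolding carrier_mat_def by blast+

lemma Hd_mult_Hd_carrier [simp]: "Hd (Suc j) x * Hd (Suc j) y \<in> carrier_mat (2^j) (2^j)"
  by (rule mult_carrier_mat[OF Hd_carrier Hd_carrier])

lemma Hd_eq_zero_mat: "\<forall>i\<in>{1..2*j+2}. x i = 0 \<Longrightarrow> Hd (Suc j) x = 0\<^sub>m (2^j) (2^j)"
proof (induction j)
  case 0
  then show ?case by (intro eq_matI) (auto simp: Complex_eq)
next
  case (Suc j)
  then have "Hd (Suc j) x = 0\<^sub>m (2^j) (2^j)" "x (2*j+3) = 0" "x (2*j+4) = 0" by auto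
  moreover have "(2::nat) ^ Suc j = 2^j + 2^j" by simp
  ultimately show ?case by (simp only: Hd.simps Let_def) (simp add: Complex_eq)
qed

lemma H_unit_Suc_low:
  "v \<le> 2*j+2 \<Longrightarrow> H_unit (Suc j) v =
     four_block_mat (H_unit j v) (0\<^sub>m (2^j) (2^j)) (0\<^sub>m (2^j) (2^j)) (mat_H (H_unit j v))"
  by (simp add: Let_def unit_point_def Complex_eq)

lemma H_unit_Suc_re: "H_unit (Suc j) (2*j+3) =
    four_block_mat (0\<^sub>m (2^j) (2^j)) (1\<^sub>m (2^j)) (- 1\<^sub>m (2^j)) (0\<^sub>m (2^j) (2^j))"
proof -
  have "H_unit j (2*j+3) = 0\<^sub>m (2^j) (2^j)" by (rule Hd_eq_zero_mat) (auto simp: unit_point_def)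
  then show ?thesis by (simp add: Let_def unit_point_def Complex_eq)
qed

lemma H_unit_Suc_im: "H_unit (Suc j) (2*j+4) =
    four_block_mat (0\<^sub>m (2^j) (2^j)) (\<i> \<cdot>\<^sub>m 1\<^sub>m (2^j)) (\<i> \<cdot>\<^sub>m 1\<^sub>m (2^j)) (0\<^sub>m (2^j) (2^j))"
proof -
  have "H_unit j (2*j+4) = 0\<^sub>m (2^j) (2^j)" by (rule Hd_eq_zero_mat) (auto simp: unit_point_def)
  then show ?thesis by (simp add: Let_def unit_point_def Complex_eq)
qed

declare Hd.simps(3) [simp del]

lemma H_unit_one: "H_unit j 1 = 1\<^sub>m (2^j)"
proof (induction j)
  case (Suc j)
  have "H_unit (Suc j) 1 =
      four_block_mat (H_unit j 1) (0\<^sub>m (2^j) (2^j)) (0\<^sub>m (2^j) (2^j)) (mat_H (H_unit j 1))"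
    by (rule H_unit_Suc_low) simp
  then show ?case unfolding Suc.IH by (simp add: mult_2)
qed (intro eq_matI, auto simp: unit_point_def Complex_eq)

lemma H_unit_skew: "v \<in> {2..2*j+2} \<Longrightarrow> mat_H (H_unit j v) = - H_unit j v"
proof (induction j arbitrary: v)
  case 0
  then show ?case by (intro eq_matI) (auto simp: unit_point_def mat_H_def Complex_eq)
next
  case (Suc j)
  note mat_H_blocks = mat_H_four_block_mat[of _ "2^j"] uminus_four_block_mat[of _ "2^j"]
  consider "v \<le> 2*j+2" | "v = 2*j+3" | "v = 2*j+4" using Suc.prems by force
  then show ?case
  proof cases
    case 1
    then show ?thesis using Suc by (simp add: H_unit_Suc_low mat_H_blocks mat_H_uminus)
  next
    case 2
    then show ?thesis by (simp add: H_unit_Suc_re mat_H_blocks mat_H_uminus)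
  next
    case 3
    then show ?thesis by (simp add: H_unit_Suc_im mat_H_blocks uminus_smult_mat)
  qed
qed

lemma H_unit_Suc_diag: "v \<in> {2..2*j+2} \<Longrightarrow>
    H_unit (Suc j) v = four_block_mat (H_unit j v) (0\<^sub>m (2^j) (2^j)) (0\<^sub>m (2^j) (2^j)) (- H_unit j v)"
  using H_unit_Suc_low[of v j] H_unit_skew[of v j] by auto

lemma H_unit_square: "v \<in> {2..2*j+2} \<Longrightarrow> H_unit j v * H_unit j v = - 1\<^sub>m (2^j)"
proof (induction j arbitrary: v)
  case 0
  then show ?case by (intro eq_matI) (auto simp: unit_point_def scalar_prod_def Complex_eq)
next
  case (Suc j)
  note S = uminus_one_mat_double block_simps mult_four_block_mat_square[where n="2^j"] uminus_four_block_mat[where n="2^j"]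
  consider "v \<in> {2..2*j+2}" | "v = 2*j+3" | "v = 2*j+4" using Suc.prems by force
  then show ?case
  proof cases
    case 1
    then show ?thesis by (simp add: H_unit_Suc_diag Suc.IH S)
  next
    case 2
    then show ?thesis by (simp add: H_unit_Suc_re S)
  next
    case 3
    then show ?thesis by (simp add: H_unit_Suc_im S)
  qed
qed

lemma H_unit_anticommute_less:
  "v \<in> {2..2*j+2} \<Longrightarrow> w \<in> {2..2*j+2} \<Longrightarrow> v < w \<Longrightarrow> H_unit j v * H_unit j w = - (H_unit j w * H_unit j v)"
proof (induction j arbitrary: v w)
  case (Suc j)
  note S = block_simps mult_four_block_mat_square[where n="2^j"] uminus_four_block_mat[where n="2^j"]
  consider "w \<in> {2..2*j+2}" | "v \<in> {2..2*j+2}" "w = 2*j+3" | "v \<in> {2..2*j+2}" "w = 2*j+4"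
    | "v = 2*j+3" "w = 2*j+4" using Suc.prems by force
  then show ?case
  proof cases
    case 1
    then have "v \<in> {2..2*j+2}" using Suc.prems by auto
    with 1 show ?thesis using Suc by (simp add: H_unit_Suc_diag S)
  next
    case 2
    then show ?thesis by (simp add: H_unit_Suc_diag H_unit_Suc_re S)
  next
    case 3
    then show ?thesis by (simp add: H_unit_Suc_diag H_unit_Suc_im S)
  next
    case 4
    then show ?thesis by (simp add: H_unit_Suc_re H_unit_Suc_im S)
  qed
qed auto

lemma H_unit_anticommute:
  "v \<in> {2..2*j+2} \<Longrightarrow> w \<in> {2..2*j+2} \<Longrightarrow> v \<noteq> w \<Longrightarrow> H_unit j v * H_unit j w = - (H_unit j w * H_unit j v)"
  using H_unit_anticommute_less[of v j w] H_unit_anticommute_less[of w j v] by (cases "v < w") auto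

fun H_unit_prod :: "nat \<Rightarrow> nat \<Rightarrow> complex mat" where
  "H_unit_prod j 0 = 1\<^sub>m (2^j)"
| "H_unit_prod j (Suc m) = H_unit_prod j m * H_unit j (m + 2)"

lemma H_unit_prod_carrier [simp]: "H_unit_prod j m \<in> carrier_mat (2^j) (2^j)"
  by (induction m) auto

lemma H_unit_prod_dims [simp]: "dim_row (H_unit_prod j m) = 2^j" "dim_col (H_unit_prod j m) = 2^j"
  using H_unit_prod_carrier[of j m] unfolding carrier_mat_def by blast+

lemma H_unit_prod_mult_H_unit_carrier [simp]: "H_unit_prod j m * H_unit j v \<in> carrier_mat (2^j) (2^j)"
  by (rule mult_carrier_mat[OF H_unit_prod_carrier Hd_carrier])

lemma H_unit_prod_Suc_diag: "m \<le> 2*j+1 \<Longrightarrow> H_unit_prod (Suc j) m =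
    four_block_mat (H_unit_prod j m) (0\<^sub>m (2^j) (2^j)) (0\<^sub>m (2^j) (2^j)) ((-1)^m \<cdot>\<^sub>m H_unit_prod j m)"
proof (induction m)
  case 0
  then show ?case by (simp add: mult_2)
next
  case (Suc m)
  then have "m + 2 \<in> {2..2*j+2}" by auto
  with Suc show ?case by (simp add: H_unit_Suc_diag block_simps mult_four_block_mat_square[where n="2^j"])
qed

lemma H_unit_prod_full: "H_unit_prod j (2*j+1) = \<i>^(j+1) \<cdot>\<^sub>m 1\<^sub>m (2^j)"
proof (induction j)
  case 0
  show ?case by (intro eq_matI) (auto simp: unit_point_def scalar_prod_def Complex_eq)
next
  case (Suc j)
  have P: "H_unit_prod (Suc j) (2*j+1) = four_block_mat (\<i>^(j+1) \<cdot>\<^sub>m 1\<^sub>m (2^j))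
      (0\<^sub>m (2^j) (2^j)) (0\<^sub>m (2^j) (2^j)) ((- (\<i>^(j+1))) \<cdot>\<^sub>m 1\<^sub>m (2^j))"
    by (subst H_unit_prod_Suc_diag, simp) (simp only: Suc.IH, simp)
  have "H_unit_prod (Suc j) (2 * Suc j + 1) =
      H_unit_prod (Suc j) (2*j+1) * H_unit (Suc j) (2*j+3) * H_unit (Suc j) (2*j+4)"
    by (simp add: numeral_eq_Suc del: H_unit_prod.simps) simp
  also have "\<dots> = \<i>^(j+2) \<cdot>\<^sub>m 1\<^sub>m (2^Suc j)"
    unfolding P by (simp add: H_unit_Suc_re H_unit_Suc_im block_simps
        mult_four_block_mat_square[where n="2^j"] smult_one_mat_double)
  finally show ?case by simp
qed

lemma H_unit_prod_invariant:
  assumes "W \<subseteq> carrier_vec (2^j)" "\<forall>v\<in>{2..m+1}. \<forall>w\<in>W. H_unit j v *\<^sub>v w \<in> W" "w \<in> W"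
  shows "H_unit_prod j m *\<^sub>v w \<in> W"
  using assms(2,3)
proof (induction m arbitrary: w)
  case (Suc m)
  then have "H_unit j (m+2) *\<^sub>v w \<in> W" by auto
  with Suc have "H_unit_prod j m *\<^sub>v (H_unit j (m+2) *\<^sub>v w) \<in> W" by auto
  moreover have "w \<in> carrier_vec (2^j)" using Suc.prems assms(1) by auto
  ultimately show ?case by (simp add: assoc_mult_mat_vec[of _ "2^j" "2^j" _ "2^j"])
qed (use assms(1) in auto)

lemma H_unit_irreducible:
  assumes "vec_subspace (2^j) W" "\<forall>v\<in>{2..2*j+1}. \<forall>w\<in>W. H_unit j v *\<^sub>v w \<in> W"
  shows "W = {0\<^sub>v (2^j)} \<or> W = carrier_vec (2^j)"
  using assms
proof (induction j arbitrary: W)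
  case 0
  then show ?case using vec_subspace_dim_one by simp
next
  case (Suc j)
  define n where "n = (2::nat)^j"
  define S where "S = upper_slice n n W"
  have dim: "(2::nat)^Suc j = n + n" by (simp add: n_def)
  have W: "vec_subspace (n + n) W" using Suc.prems(1) dim by simp
  have "vec_subspace n S" unfolding S_def by (rule vec_subspace_upper_slice[OF W])
  moreover have "\<forall>v\<in>{2..2*j+1}. \<forall>x\<in>S. H_unit j v *\<^sub>v x \<in> S"
  proof (intro ballI)
    fix v x assume v: "v \<in> {2..2*j+1}" and x: "x \<in> S"
    have "H_unit (Suc j) v = four_block_mat (H_unit j v) (0\<^sub>m n n) (0\<^sub>m n n) (- H_unit j v)"
      unfolding n_def using v by (intro H_unit_Suc_diag) auto
    moreover have "\<forall>w\<in>W. H_unit (Suc j) v *\<^sub>v w \<in> W" using Suc.prems(2) v by auto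
    ultimately have inv: "\<forall>w\<in>W. four_block_mat (H_unit j v) (0\<^sub>m n n) (0\<^sub>m n n) (- H_unit j v) *\<^sub>v w \<in> W"
      by simp
    show "H_unit j v *\<^sub>v x \<in> S"
      unfolding S_def by (rule upper_slice_invariant[OF _ _ inv x[unfolded S_def]]) (simp_all add: n_def)
  qed
  ultimately have S: "S = {0\<^sub>v n} \<or> S = carrier_vec n" using Suc.IH unfolding n_def by blast
  have central: "H_unit_prod (Suc j) (2*j+1) = four_block_mat (\<i>^(j+1) \<cdot>\<^sub>m 1\<^sub>m n)
      (0\<^sub>m n n) (0\<^sub>m n n) ((- (\<i>^(j+1))) \<cdot>\<^sub>m 1\<^sub>m n)"
    unfolding n_def by (subst H_unit_prod_Suc_diag, simp) (simp only: H_unit_prod_full, simp)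
  have "\<forall>w\<in>W. H_unit_prod (Suc j) (2*j+1) *\<^sub>v w \<in> W"
    using H_unit_prod_invariant[of W "Suc j" "2*j+1"] Suc.prems unfolding vec_subspace_def by auto
  moreover have "\<forall>w\<in>W. H_unit (Suc j) (2*j+3) *\<^sub>v w \<in> W" using Suc.prems(2) by auto
  ultimately have W_eq: "W = {x @\<^sub>v y | x y. x \<in> S \<and> y \<in> S}"
    using vec_subspace_eq_append_slices[OF W, of "\<i>^(j+1)"]
    unfolding central H_unit_Suc_re n_def[symmetric] S_def by simp
  have "carrier_vec (n + n) = {x @\<^sub>v y | x y. x \<in> carrier_vec n \<and> y \<in> carrier_vec n}"
    by (auto simp: all_vec_append) (metis vec_first_last_append vec_first_carrier vec_last_carrier)
  with S W_eq have "W = {0\<^sub>v (n + n)} \<or> W = carrier_vec (n + n)" by auto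
  then show ?case unfolding dim .
qed

lemma Ecoef_eq_H_unit: "i \<le> 2*j \<Longrightarrow> Ecoef (Suc j) i = H_unit j (i + 1)"
proof -
  assume "i \<le> 2*j"
  then have "(\<lambda>l. if l = i + 1 then 1 else 0)(2 * Suc j := 0) = unit_point (i + 1)"
    by (auto simp: unit_point_def)
  then show ?thesis unfolding Ecoef_def Hodd_def by simp
qed

lemma Gmat_eq_H_unit: "i \<le> 2*j \<Longrightarrow> Gmat (Suc j) i = H_unit j (i + 1)"
proof -
  assume "i \<le> 2*j"
  moreover have "Ecoef (Suc j) 0 = 1\<^sub>m (2^j)" using Ecoef_eq_H_unit[of 0 j] H_unit_one[of j] by simp
  ultimately show ?thesis unfolding Gmat_def by (simp add: Ecoef_eq_H_unit)
qed

theorem lemma6: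
  fixes k :: nat
  assumes "k \<ge> 1"
  shows "irreducible_G_rep (2*k - 2) (2^(k-1)) (Gmat k)"
proof -
  obtain j where k: "k = Suc j" using assms by (cases k) auto
  have G: "Gmat k i = H_unit j (i + 1)" if "i \<in> {1..2*j}" for i
    using that Gmat_eq_H_unit k by auto
  have "is_G_rep (2*j) (2^j) (Gmat k)"
    unfolding is_G_rep_def
  proof (intro conjI ballI impI)
    fix i l assume i: "i \<in> {1..2*j}" and l: "l \<in> {1..2*j}" and "i \<noteq> l"
    then show "Gmat k i * Gmat k l = - (Gmat k l * Gmat k i)"
      unfolding G[OF i] G[OF l] by (intro H_unit_anticommute) auto
  qed (auto simp: G intro: H_unit_square)
  moreover have "W = {0\<^sub>v (2^j)} \<or> W = carrier_vec (2^j)"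
    if "G_invariant_subspace (2*j) (2^j) (Gmat k) W" for W
  proof (rule H_unit_irreducible)
    show "vec_subspace (2^j) W"
      using that unfolding G_invariant_subspace_def vec_subspace_def by auto
    show "\<forall>v\<in>{2..2*j+1}. \<forall>w\<in>W. H_unit j v *\<^sub>v w \<in> W"
    proof (intro ballI)
      fix v w assume v: "v \<in> {2..2*j+1}" and "w \<in> W"
      then have i: "v - 1 \<in> {1..2*j}" by auto
      with \<open>w \<in> W\<close> have "Gmat k (v - 1) *\<^sub>v w \<in> W"
        using that unfolding G_invariant_subspace_def by blast
      moreover have "Gmat k (v - 1) = H_unit j v" using G[OF i] v by simp
      ultimately show "H_unit j v *\<^sub>v w \<in> W" by simp
    qed
  qed
  ultimately show ?thesis unfolding irreducible_G_rep_def k by simp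
qed

end
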